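(* For every positive integer $n$, $$\sum_{k=1}^{n} \frac{2^k}{k} = \frac{2^n}{\mathrm{lcm}(1,2,\dots,n)} \cdot N_n,$$ where $N_n := \mathrm{lcm}\left\{\binom{n-1}{0}, \binom{n-1}{1}, \dots, \binom{n-1}{n-1}\right\} \cdot \sum_{k=0}^{n-1} \binom{n-1}{k}^{-1}$ is a positive integer. *)

theory Defs
  imports Complex_Main
begin

definition N_seq :: "nat \<Rightarrow> real" where
  "N_seq n = real (Lcm ((\<lambda>k. (n - 1) choose k) ` {0..n-1}))
              * (\<Sum>k=0..n-1. 1 / real ((n - 1) choose k))"

end

theory Submission
  imports Defs
begin

text \<open>
  Write \<open>S(j) = \<Sum>k\<le>j. 1 / C(j,k)\<close>. Pairing the terms \<open>1/C(j+1,k)\<close> and \<open>1/C(j+1,k+1)\<close>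
  gives the recurrence \<open>S(j+1) = (j+2)/(2(j+1)) S(j) + 1\<close>, and by induction
  \<open>\<Sum>k=1..j+1. 2^k/k = 2^(j+1)/(j+1) \<cdot> S(j)\<close>.
  It remains to identify \<open>lcm(1,\<dots>,j+1)\<close> with \<open>(j+1) \<cdot> lcm_k C(j,k)\<close>. Both sides are
  the least common multiple of the denominators of a Leibniz harmonic triangle: its
  entries \<open>1/((r+1) C(r,k))\<close> satisfy \<open>L(r,k) = L(r+1,k) + L(r+1,k+1)\<close>, so a multiple
  of the denominators of row \<open>j\<close> is one for all earlier rows, and a multiple of the
  denominators \<open>1,\<dots>,j+1\<close> of the left edge is one of the whole triangle.
\<close>

definition inverse_binomial_sum :: "nat \<Rightarrow> real" where
  "inverse_binomial_sum j = (\<Sum>k=0..j. 1 / real (j choose k))"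

lemma inverse_binomial_pair:
  fixes j k :: nat
  assumes "k \<le> j"
  shows "1 / real (Suc j choose k) + 1 / real (Suc j choose Suc k)
         = real (j + 2) / (real (Suc j) * real (j choose k))"
proof -
  have pos: "real (j choose k) > 0" "real (Suc j choose k) > 0" "real (Suc j choose Suc k) > 0"
    using assms by (simp_all del: binomial_Suc_Suc)
  have "real (Suc j - k) * real (Suc j choose k) = real (Suc j) * real (j choose k)"
    using binomial_absorb_comp[of "Suc j" k] by (metis diff_Suc_1 of_nat_mult)
  then have left: "1 / real (Suc j choose k) = real (Suc j - k) / (real (Suc j) * real (j choose k))"
    using pos by (simp add: field_simps del: of_nat_Suc)
  have "real (Suc k) * real (Suc j choose Suc k) = real (Suc j) * real (j choose k)"
    using Suc_times_binomial[of k j] by (metis of_nat_mult)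
  then have right: "1 / real (Suc j choose Suc k) = real (Suc k) / (real (Suc j) * real (j choose k))"
    using pos by (simp add: field_simps del: of_nat_Suc)
  have "real (Suc j - k) + real (Suc k) = real (j + 2)"
    using assms by (simp add: of_nat_diff)
  then show ?thesis
    unfolding left right by (simp add: add_divide_distrib[symmetric])
qed

lemma inverse_binomial_sum_Suc:
  "inverse_binomial_sum (Suc j) = real (j + 2) / (2 * real (Suc j)) * inverse_binomial_sum j + 1"
proof -
  have drop_last: "inverse_binomial_sum (Suc j) = (\<Sum>k=0..j. 1 / real (Suc j choose k)) + 1"
    unfolding inverse_binomial_sum_def by (simp add: sum.atLeast0_atMost_Suc)
  have drop_first: "inverse_binomial_sum (Suc j) = 1 + (\<Sum>k=0..j. 1 / real (Suc j choose Suc k))"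
    unfolding inverse_binomial_sum_def by (subst sum.atLeast0_atMost_Suc_shift) simp
  have "(\<Sum>k=0..j. 1 / real (Suc j choose k)) + (\<Sum>k=0..j. 1 / real (Suc j choose Suc k))
        = (\<Sum>k=0..j. real (j + 2) / (real (Suc j) * real (j choose k)))"
    unfolding sum.distrib[symmetric] by (rule sum.cong) (simp_all add: inverse_binomial_pair del: binomial_Suc_Suc)
  also have "\<dots> = real (j + 2) / real (Suc j) * inverse_binomial_sum j"
    unfolding inverse_binomial_sum_def by (simp add: sum_distrib_left)
  finally show ?thesis
    using drop_last drop_first by (simp add: field_simps)
qed

lemma sum_power2_div_eq_inverse_binomial_sum:
  "(\<Sum>k=1..Suc j. 2 ^ k / real k) = 2 ^ Suc j / real (Suc j) * inverse_binomial_sum j"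
proof (induction j)
  case 0
  then show ?case by (simp add: inverse_binomial_sum_def)
next
  case (Suc j)
  have "(\<Sum>k=1..Suc (Suc j). 2 ^ k / real k)
        = 2 ^ Suc j / real (Suc j) * inverse_binomial_sum j + 2 ^ Suc (Suc j) / real (Suc (Suc j))"
    using Suc by simp
  also have "\<dots> = 2 ^ Suc (Suc j) / real (Suc (Suc j)) * inverse_binomial_sum (Suc j)"
    unfolding inverse_binomial_sum_Suc by (simp add: field_simps del: of_nat_Suc)
  finally show ?case .
qed

definition leibniz_harmonic :: "nat \<Rightarrow> nat \<Rightarrow> real" where
  "leibniz_harmonic r k = 1 / real (r choose k) / real (Suc r)"

lemma leibniz_harmonic_rule:
  assumes "k \<le> r"
  shows "leibniz_harmonic r k = leibniz_harmonic (Suc r) k + leibniz_harmonic (Suc r) (Suc k)"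
proof -
  have "leibniz_harmonic (Suc r) k + leibniz_harmonic (Suc r) (Suc k)
        = (1 / real (Suc r choose k) + 1 / real (Suc r choose Suc k)) / real (Suc (Suc r))"
    unfolding leibniz_harmonic_def by (simp add: add_divide_distrib del: binomial_Suc_Suc)
  also have "\<dots> = leibniz_harmonic r k"
    unfolding inverse_binomial_pair[OF assms] leibniz_harmonic_def
    using assms by (simp add: field_simps del: of_nat_Suc)
  finally show ?thesis ..
qed

lemma real_of_nat_divide_in_Ints_iff:
  assumes "m > 0"
  shows "real D / real m \<in> \<int> \<longleftrightarrow> m dvd D"
proof
  assume "real D / real m \<in> \<int>"
  then obtain z where "real D / real m = of_int z" by (elim Ints_cases)
  then have "int D = int m * z"
    using assms by (simp add: field_simps) (metis of_int_eq_iff of_int_mult of_int_of_nat_eq)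
  then show "m dvd D" by (metis dvd_triv_left int_dvd_int_iff)
next
  assume "m dvd D"
  then show "real D / real m \<in> \<int>" by (simp flip: real_of_nat_div)
qed

lemma of_nat_times_leibniz_harmonic_in_Ints_iff:
  assumes "k \<le> r"
  shows "real D * leibniz_harmonic r k \<in> \<int> \<longleftrightarrow> Suc r * (r choose k) dvd D"
  using real_of_nat_divide_in_Ints_iff[of "Suc r * (r choose k)" D] assms
  unfolding leibniz_harmonic_def by (simp add: divide_divide_eq_left algebra_simps)

lemma leibniz_harmonic_Ints_from_row:
  assumes row: "\<forall>k\<le>j. c * leibniz_harmonic j k \<in> \<int>" and "k \<le> r" "r \<le> j"
  shows "c * leibniz_harmonic r k \<in> \<int>"
  using assms(2,3)
proof (induction "j - r" arbitrary: r k)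
  case 0
  then show ?case using row by simp
next
  case (Suc d)
  have "c * leibniz_harmonic r k = c * leibniz_harmonic (Suc r) k + c * leibniz_harmonic (Suc r) (Suc k)"
    using leibniz_harmonic_rule[OF Suc.prems(1)] by (simp add: distrib_left)
  moreover have "c * leibniz_harmonic (Suc r) k \<in> \<int>" "c * leibniz_harmonic (Suc r) (Suc k) \<in> \<int>"
    using Suc by simp_all
  ultimately show ?case by simp
qed

lemma leibniz_harmonic_Ints_from_column:
  assumes column: "\<forall>r\<le>j. c * leibniz_harmonic r 0 \<in> \<int>" and "k \<le> r" "r \<le> j"
  shows "c * leibniz_harmonic r k \<in> \<int>"
  using assms(2,3)
proof (induction k arbitrary: r)
  case 0
  then show ?case using column by simp
next
  case (Suc k)
  then obtain r' where r': "r = Suc r'" by (cases r) auto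
  have "c * leibniz_harmonic r (Suc k) = c * leibniz_harmonic r' k - c * leibniz_harmonic r k"
    using leibniz_harmonic_rule[of k r'] Suc.prems r' by (simp add: algebra_simps)
  moreover have "c * leibniz_harmonic r' k \<in> \<int>" "c * leibniz_harmonic r k \<in> \<int>"
    using Suc r' by simp_all
  ultimately show ?case by simp
qed

lemma Suc_times_Lcm_binomial_eq_Lcm_atLeastAtMost:
  "Suc j * Lcm ((\<lambda>k. j choose k) ` {0..j}) = Lcm {1..Suc j}"
proof -
  define D where "D = Suc j * Lcm ((\<lambda>k. j choose k) ` {0..j})"
  define L where "L = Lcm (Suc ` {0..j})"
  have D_Lcm: "D = Lcm ((\<lambda>k. Suc j * (j choose k)) ` {0..j})"
    using Lcm_mult[of "(\<lambda>k. j choose k) ` {0..j}" "Suc j"] unfolding D_def by (simp add: image_image)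
  have "\<forall>k\<le>j. real D * leibniz_harmonic j k \<in> \<int>"
    by (auto simp: of_nat_times_leibniz_harmonic_in_Ints_iff D_Lcm intro: dvd_Lcm)
  then have "\<forall>r\<le>j. real D * leibniz_harmonic r 0 \<in> \<int>"
    by (auto intro: leibniz_harmonic_Ints_from_row)
  then have "L dvd D"
    unfolding L_def Lcm_dvd_iff
    by (auto simp: of_nat_times_leibniz_harmonic_in_Ints_iff simp del: image_Suc_atLeastAtMost)
  have "\<forall>r\<le>j. real L * leibniz_harmonic r 0 \<in> \<int>"
    by (auto simp: of_nat_times_leibniz_harmonic_in_Ints_iff L_def intro: dvd_Lcm simp del: image_Suc_atLeastAtMost)
  then have "\<forall>k\<le>j. real L * leibniz_harmonic j k \<in> \<int>"
    by (auto intro: leibniz_harmonic_Ints_from_column)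
  then have "D dvd L"
    unfolding D_Lcm Lcm_dvd_iff by (auto simp: of_nat_times_leibniz_harmonic_in_Ints_iff)
  with \<open>L dvd D\<close> show ?thesis
    unfolding D_def L_def by (simp add: dvd_antisym)
qed

lemma Lcm_times_sum_inverse_in_Nats:
  fixes f :: "'a \<Rightarrow> nat"
  assumes "finite I"
  shows "real (Lcm (f ` I)) * (\<Sum>i\<in>I. 1 / real (f i)) \<in> \<nat>"
proof -
  have "real (Lcm (f ` I)) * (\<Sum>i\<in>I. 1 / real (f i)) = (\<Sum>i\<in>I. real (Lcm (f ` I) div f i))"
    unfolding sum_distrib_left by (intro sum.cong) (auto simp: real_of_nat_div dvd_Lcm)
  then show ?thesis by (metis of_nat_in_Nats of_nat_sum)
qed

theorem mainTheorem8:
  fixes n :: nat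
  assumes "n \<ge> 1"
  shows "(\<Sum>k=1..n. 2 ^ k / real k) = 2 ^ n / real (Lcm {1..n}) * N_seq n
         \<and> N_seq n \<in> \<nat> \<and> N_seq n > 0"
proof -
  obtain j where n: "n = Suc j" using assms by (cases n) auto
  define M where "M = Lcm ((\<lambda>k. j choose k) ` {0..j})"
  have N: "N_seq (Suc j) = real M * inverse_binomial_sum j"
    unfolding N_seq_def inverse_binomial_sum_def M_def by simp
  have "M > 0"
    unfolding M_def by (subst neq0_conv[symmetric], subst Lcm_0_iff_nat) auto
  moreover have "inverse_binomial_sum j > 0"
    unfolding inverse_binomial_sum_def by (rule sum_pos) auto
  moreover have "real (Lcm {1..Suc j}) = real (Suc j) * real M"
    unfolding M_def Suc_times_Lcm_binomial_eq_Lcm_atLeastAtMost[symmetric] by (simp only: of_nat_mult)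
  moreover have "N_seq n \<in> \<nat>"
    unfolding N_seq_def by (rule Lcm_times_sum_inverse_in_Nats) simp
  ultimately show ?thesis
    unfolding n N sum_power2_div_eq_inverse_binomial_sum by (simp add: field_simps del: of_nat_Suc)
qed

end
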